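(* Let $\{\mathcal{N}(\mathbf{t}),\mathbf{t}\in\mathbb{R}^d_+\}$ be a multiparameter Poisson process with transition parameter $\boldsymbol{\Lambda}=(\lambda_1,\dots,\lambda_d)$, $\lambda_i>0$. For $\alpha_i\in(0,1)$ let $S_1^{\alpha_1},\dots,S_d^{\alpha_d}$ be independent stable subordinators, independent of $\mathcal{N}$, and set $\mathcal{N}^{\boldsymbol{\alpha}}(t)=\mathcal{N}(S_1^{\alpha_1}(t),\dots,S_d^{\alpha_d}(t))$, $t\ge0$. Then $p^{\boldsymbol{\alpha}}(n,t)=\Pr\{\mathcal{N}^{\boldsymbol{\alpha}}(t)=n\}$, $n\ge0$, is given by $$p^{\boldsymbol{\alpha}}(n,t)=\sum_{\Theta(n,d)}\prod_{i=1}^d\frac{(-1)^{n_i}}{n_i!}\sum_{r=0}^\infty\frac{(-\lambda_i^{\alpha_i}t)^r\Gamma(\alpha_ir+1)}{r!\,\Gamma(\alpha_ir+1-n_i)},$$ where $\Theta(n,d)=\{(n_1,\dots,n_d):0\le n_i\le n,\ \sum_i n_i=n\}$, and it solves $$\frac{\mathrm{d}}{\mathrm{d}t}p^{\boldsymbol{\alpha}}(n,t)=-\sum_{j=1}^d\lambda_j^{\alpha_j}\sum_{r_j=0}^n\frac{(-1)^{r_j}\Gamma(\alpha_j+1)}{r_j!\,\Gamma(\alpha_j+1-r_j)}p^{\boldsymbol{\alpha}}(n-r_j,t),\quad n\ge0,$$ with $p^{\boldsymbol{\alpha}}(0,0)=1$ and $p^{\boldsymbol{\alpha}}(n,0)=0$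 for $n\ge1$.
   Context: An $\alpha$-stable subordinator, $\alpha\in(0,1)$, is a subordinator $S^\alpha$ with $\mathbb{E}e^{-wS^\alpha(t)}=e^{-tw^\alpha}$, $w>0$. $\preceq$ is the componentwise order on $\mathbb{R}^d_+$, $\prec$ the strict relation, $\boldsymbol{\Lambda}\cdot\mathbf{t}=\sum_i\lambda_it_i$. A multiparameter Poisson process with transition parameter $\boldsymbol{\Lambda}$ is a nonnegative-integer-valued random field on $\mathbb{R}^d_+$ with $\mathcal{N}(\mathbf{0})=0$, nondecreasing in $\preceq$, with independent increments along chains $\mathbf{0}=\mathbf{t}^{(0)}\prec\dots\prec\mathbf{t}^{(m)}$, stationary increments ($\mathcal{N}(\mathbf{t})-\mathcal{N}(\mathbf{s})\overset{d}{=}\mathcal{N}(\mathbf{t}-\mathbf{s})$ for $\mathbf{s}\preceq\mathbf{t}$), and $\mathcal{N}(\mathbf{t})\sim$ Poisson$(\boldsymbol{\Lambda}\cdot\mathbf{t})$. *)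

theory Defs
  imports "HOL-Probability.Probability"
begin

text \<open>Index set of the d parameters: a finite type 'd (d = CARD('d)).
  Points of R^d_+ are functions t :: 'd \<Rightarrow> real with all components \<ge> 0;
  the componentwise order is the pointwise order on functions, and the strict
  relation is its strict part (s \<le> t and s \<noteq> t).\<close>

definition nonneg_vec :: "('d \<Rightarrow> real) \<Rightarrow> bool" where
  "nonneg_vec t \<longleftrightarrow> (\<forall>i. 0 \<le> t i)"

definition mp_poisson ::
  "'a measure \<Rightarrow> ('d::finite \<Rightarrow> real) \<Rightarrow> ('a \<Rightarrow> ('d \<Rightarrow> real) \<Rightarrow> nat) \<Rightarrow> bool" where
  "mp_poisson M Lam N \<longleftrightarrow>
     (\<lambda>(\<omega>, t). N \<omega> t) \<in> measurable (M \<Otimes>\<^sub>M (PiM UNIV (\<lambda>_. borel))) (count_space UNIV) \<and>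
     (\<forall>\<omega>\<in>space M. N \<omega> (\<lambda>_. 0) = 0) \<and>
     (\<forall>\<omega>\<in>space M. \<forall>s t. nonneg_vec s \<and> s \<le> t \<longrightarrow> N \<omega> s \<le> N \<omega> t) \<and>
     (\<forall>(m::nat) (c::nat \<Rightarrow> 'd \<Rightarrow> real). c 0 = (\<lambda>_. 0) \<and> (\<forall>k<m. c k < c (Suc k)) \<longrightarrow>
        prob_space.indep_vars M (\<lambda>_. count_space UNIV)
          (\<lambda>k \<omega>. N \<omega> (c (Suc k)) - N \<omega> (c k)) {..<m}) \<and>
     (\<forall>s t. nonneg_vec s \<and> s \<le> t \<longrightarrow>
        distr M (count_space UNIV) (\<lambda>\<omega>. N \<omega> t - N \<omega> s) =
        distr M (count_space UNIV) (\<lambda>\<omega>. N \<omega> (\<lambda>i. t i - s i))) \<and>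
     (\<forall>t k. nonneg_vec t \<longrightarrow>
        measure M {\<omega>\<in>space M. N \<omega> t = k} =
          exp (- (\<Sum>i\<in>UNIV. Lam i * t i)) * (\<Sum>i\<in>UNIV. Lam i * t i) ^ k / fact k)"

definition stable_subordinator ::
  "'a measure \<Rightarrow> real \<Rightarrow> ('a \<Rightarrow> real \<Rightarrow> real) \<Rightarrow> bool" where
  "stable_subordinator M \<alpha> S \<longleftrightarrow>
     (\<forall>t. (\<lambda>\<omega>. S \<omega> t) \<in> borel_measurable M) \<and>
     (\<forall>\<omega>\<in>space M. S \<omega> 0 = 0) \<and>
     (\<forall>\<omega>\<in>space M. \<forall>s t. 0 \<le> s \<and> s \<le> t \<longrightarrow> S \<omega> s \<le> S \<omega> t) \<and>
     (\<forall>(m::nat) (c::nat \<Rightarrow> real). c 0 = 0 \<and> (\<forall>k<m. c k < c (Suc k)) \<longrightarrow>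
        prob_space.indep_vars M (\<lambda>_. borel)
          (\<lambda>k \<omega>. S \<omega> (c (Suc k)) - S \<omega> (c k)) {..<m}) \<and>
     (\<forall>s t. 0 \<le> s \<and> s \<le> t \<longrightarrow>
        distr M borel (\<lambda>\<omega>. S \<omega> t - S \<omega> s) = distr M borel (\<lambda>\<omega>. S \<omega> (t - s))) \<and>
     (\<forall>t w. 0 \<le> t \<and> 0 < w \<longrightarrow>
        (\<integral>\<omega>. exp (- w * S \<omega> t) \<partial>M) = exp (- t * w powr \<alpha>))"

definition Theta :: "nat \<Rightarrow> ('d::finite \<Rightarrow> nat) set" where
  "Theta n = {m. (\<forall>i. m i \<le> n) \<and> (\<Sum>i\<in>UNIV. m i) = n}"

end

theory Submission
  imports Defs "HOL-Computational_Algebra.Formal_Power_Series"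
begin

text \<open>Approximating the random time vector S(t) from below on the lattice of mesh 1/(K + 1), the
  independence of N and S together with the Poisson marginals gives, in the limit,
  P(N(S(t)) = n) = E[exp(- Lam.S(t)) (Lam.S(t))^n / n!]; monotone paths and stationary increments
  control the error. The multinomial expansion of this Poisson weight and the independence of the
  S_i factorise the expectation over the coordinates. For one coordinate, the generating function
  of the expected Poisson weights of lam S(t) is the Laplace transform exp (- t lam^a (1 - u)^a);
  expanding it in t and, by the generalised binomial theorem, in u yields the stated series, whose
  termwise derivative is rearranged by Vandermonde's identity into the differential equation.\<close>

lemma abs_gbinomial_le_binomial:
  fixes a :: real
  assumes "0 \<le> a" "a \<le> real r"
  shows "\<bar>a gchoose m\<bar> \<le> real ((r + m) choose m)"
proof (induction m)
  case 0
  then show ?case by simp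
next
  case (Suc m)
  have step: "a gchoose Suc m = (a - real m) * (a gchoose m) / real (Suc m)"
    using gbinomial_mult_1[of a m] by (simp add: field_simps)
  have "real (Suc (r + m)) * real ((r + m) choose m) = real ((r + Suc m) choose Suc m) * real (Suc m)"
    using Suc_times_binomial_eq[of "r + m" m] by (metis add_Suc_right of_nat_mult)
  then have binomial_step: "real (Suc (r + m)) * real ((r + m) choose m) / real (Suc m)
      = real ((r + Suc m) choose Suc m)"
    by (simp add: field_simps)
  have "\<bar>a gchoose Suc m\<bar> = \<bar>a - real m\<bar> * \<bar>a gchoose m\<bar> / real (Suc m)"
    by (simp add: step abs_mult)
  also have "\<dots> \<le> real (Suc (r + m)) * real ((r + m) choose m) / real (Suc m)"
    using assms by (intro divide_right_mono mult_mono Suc) auto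
  finally show ?case
    unfolding binomial_step .
qed

lemma abs_gbinomial_le_power2:
  fixes a :: real
  assumes "0 \<le> a" "a \<le> real r"
  shows "\<bar>a gchoose m\<bar> \<le> 2 ^ (r + m)"
proof -
  have "real ((r + m) choose m) \<le> 2 ^ (r + m)"
    using binomial_le_pow2[of "r + m" m] by (metis of_nat_le_iff of_nat_numeral of_nat_power)
  then show ?thesis
    using abs_gbinomial_le_binomial[OF assms, of m] by linarith
qed

lemma gbinomial_Gamma_nonneg:
  fixes a :: real
  assumes "0 \<le> a"
  shows "a gchoose k = Gamma (a + 1) / (fact k * Gamma (a + 1 - real k))"
proof -
  have "a + 1 \<notin> \<int>\<^sub>\<le>\<^sub>0"
    using assms nonpos_Ints_nonpos by fastforce
  then show ?thesis
    by (simp add: gbinomial_Gamma algebra_simps)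
qed

lemma exp_sums_real: "(\<lambda>n. x ^ n / fact n) sums exp (x :: real)"
  using exp_converges[of x] by (simp add: divide_inverse mult.commute)

lemma sums_swap_dominated:
  fixes f :: "nat \<Rightarrow> nat \<Rightarrow> real"
  assumes bound: "\<And>r m. \<bar>f r m\<bar> \<le> A r * B m" and A: "summable A" and B: "summable B"
    and A0: "\<And>r. 0 \<le> A r" and B0: "\<And>m. 0 \<le> B m"
    and row: "\<And>r. (\<lambda>m. f r m) sums g r" and col: "\<And>m. (\<lambda>r. f r m) sums h m"
    and g: "g sums s"
  shows "h sums s"
proof -
  have AB_rows: "((\<lambda>m. A r * B m) has_sum (A r * suminf B)) UNIV" for r
    using A0 B0 by (intro sums_nonneg_imp_has_sum sums_mult summable_sums B) (simp add: mult_nonneg_nonneg)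
  have AB_nonneg: "0 \<le> A r * B m" for r m
    using A0 B0 by simp
  have rows: "(\<lambda>m. norm (A r * B m)) summable_on UNIV" for r
    using AB_rows[of r] AB_nonneg by (auto intro: has_sum_imp_summable)
  have "(\<lambda>r. A r * suminf B) summable_on UNIV"
    using A0 suminf_nonneg[OF B B0] by (intro summable_nonneg_imp_summable_on summable_mult2 A) auto
  then have cols: "(\<lambda>r. norm (\<Sum>\<^sub>\<infinity>m. norm (A r * B m))) summable_on UNIV"
    using A0 suminf_nonneg[OF B B0] AB_nonneg infsumI[OF AB_rows] by simp
  have AB: "Infinite_Sum.abs_summable_on (\<lambda>(r, m). A r * B m) (UNIV \<times> UNIV)"
    using rows cols by (intro Infinite_Sum.abs_summable_on_Sigma_iff[THEN iffD2]) simp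
  have f_le: "\<bar>f r m\<bar> \<le> \<bar>A r * B m\<bar>" for r m
    using bound[of r m] AB_nonneg[of r m] by linarith
  have "Infinite_Sum.abs_summable_on (\<lambda>(r, m). f r m) (UNIV \<times> UNIV)"
    by (rule Infinite_Sum.abs_summable_on_comparison_test[OF AB]) (clarsimp, rule f_le)
  then have "(\<lambda>(r, m). f r m) summable_on UNIV \<times> UNIV"
    by (rule abs_summable_summable)
  then obtain S where S: "((\<lambda>(r, m). f r m) has_sum S) (UNIV \<times> UNIV)"
    by (auto simp: summable_on_def)
  have row': "((\<lambda>m. f r m) has_sum g r) UNIV" for r
    by (intro norm_summable_imp_has_sum row summable_comparison_test'[OF summable_mult[OF B, of "A r"]])
       (use bound in auto)
  have col': "((\<lambda>r. f r m) has_sum h m) UNIV" for m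
    by (intro norm_summable_imp_has_sum col summable_comparison_test'[OF summable_mult2[OF A, of "B m"]])
       (use bound in auto)
  have "(g has_sum S) UNIV"
    by (rule has_sum_SigmaD[OF S]) (simp add: row')
  then have "S = s"
    using g has_sum_imp_sums sums_unique2 by blast
  have "((\<lambda>(m, r). f r m) has_sum S) (UNIV \<times> UNIV)"
    using S by (subst (asm) has_sum_swap) simp
  then have "(h has_sum S) UNIV"
    by (rule has_sum_SigmaD) (simp_all add: col')
  then show ?thesis
    using \<open>S = s\<close> has_sum_imp_sums by blast
qed

lemma powser_coeffs_unique_at_right:
  fixes a b :: "nat \<Rightarrow> real"
  assumes "0 < e"
    and a: "\<And>u. 0 < u \<Longrightarrow> u < e \<Longrightarrow> (\<lambda>m. a m * u ^ m) sums F u"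
    and b: "\<And>u. 0 < u \<Longrightarrow> u < e \<Longrightarrow> (\<lambda>m. b m * u ^ m) sums F u"
  shows "a = b"
proof -
  define d where "d m = a m - b m" for m
  have d_sums: "(\<lambda>m. d m * u ^ m) sums 0" if "0 < u" "u < e" for u
    using sums_diff[OF a[OF that] b[OF that]] by (simp add: d_def algebra_simps)
  have "d m = 0" for m
  proof (induction m rule: less_induct)
    case (less m)
    \<comment> \<open>With the lower coefficients gone, the tail divided by u^m is a power series vanishing on
      (0, e), so its constant term d m is zero by continuity at 0.\<close>
    have tail: "(\<lambda>i. d (i + m) * u ^ i) sums 0" if u: "0 < u" "u < e" for u
    proof -
      have "(\<lambda>i. d (i + m) * u ^ (i + m)) sums 0"
        using sums_iff_shift[of "\<lambda>i. d i * u ^ i" m 0] d_sums[OF u] less by simp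
      then have "(\<lambda>i. d (i + m) * u ^ (i + m) * (1 / u ^ m)) sums (0 * (1 / u ^ m))"
        by (rule sums_mult2)
      then show ?thesis
        using u by (simp add: power_add)
    qed
    define g where "g u = (\<Sum>i. d (i + m) * u ^ i)" for u :: real
    have summable: "summable (\<lambda>i. d (i + m) * (e / 2) ^ i)"
      using tail[of "e / 2"] \<open>0 < e\<close> by (simp add: sums_iff)
    have "isCont g 0"
      unfolding g_def by (rule isCont_powser[OF summable]) (use \<open>0 < e\<close> in simp)
    then have lim_g0: "(g \<longlongrightarrow> g 0) (at_right 0)"
      by (simp add: isCont_def filterlim_at_split)
    have "eventually (\<lambda>u. g u = 0) (at_right 0)"
      unfolding eventually_at_right_field
      using \<open>0 < e\<close> tail by (auto simp: g_def sums_iff intro!: exI[of _ e])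
    then have "(g \<longlongrightarrow> 0) (at_right 0)"
      by (rule tendsto_eventually)
    with lim_g0 have "g 0 = 0"
      using tendsto_unique trivial_limit_at_right_real by blast
    then show ?case
      using powser_zero[of "\<lambda>i. d (i + m)"] by (simp add: g_def)
  qed
  then show ?thesis
    by (auto simp: d_def)
qed

text \<open>The coefficient of u^m in exp (- c t (1 - u) powr a), obtained by expanding the exponential
  in t and each power of 1 - u by the generalised binomial theorem. For c = lam powr a it is the
  probability that a Poisson process of rate lam, evaluated at an a-stable subordinator at time t,
  equals m.\<close>

definition stable_poisson_coeff :: "real \<Rightarrow> real \<Rightarrow> nat \<Rightarrow> nat \<Rightarrow> real" where
  "stable_poisson_coeff a c m r = (- c) ^ r / fact r * ((-1) ^ m * ((a * real r) gchoose m))"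

definition stable_poisson_prob :: "real \<Rightarrow> real \<Rightarrow> nat \<Rightarrow> real \<Rightarrow> real" where
  "stable_poisson_prob a c m t = (\<Sum>r. stable_poisson_coeff a c m r * t ^ r)"

lemma abs_stable_poisson_coeff_le:
  assumes "0 \<le> a" "a \<le> 1"
  shows "\<bar>stable_poisson_coeff a c m r * t ^ r\<bar> \<le> 2 ^ m * ((2 * \<bar>c\<bar> * \<bar>t\<bar>) ^ r / fact r)"
proof -
  have gbinomial_le: "\<bar>(a * real r) gchoose m\<bar> \<le> 2 ^ (r + m)"
    using assms by (intro abs_gbinomial_le_power2) (auto intro: mult_left_le_one_le)
  have "\<bar>stable_poisson_coeff a c m r * t ^ r\<bar>
      = \<bar>c\<bar> ^ r / fact r * \<bar>(a * real r) gchoose m\<bar> * \<bar>t\<bar> ^ r"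
    by (simp add: stable_poisson_coeff_def abs_mult power_abs)
  also have "\<dots> \<le> \<bar>c\<bar> ^ r / fact r * 2 ^ (r + m) * \<bar>t\<bar> ^ r"
    using gbinomial_le by (intro mult_right_mono mult_left_mono) auto
  also have "\<dots> = 2 ^ m * ((2 * \<bar>c\<bar> * \<bar>t\<bar>) ^ r / fact r)"
    by (simp add: power_add power_mult_distrib field_simps)
  finally show ?thesis .
qed

lemma summable_stable_poisson_coeff:
  assumes "0 \<le> a" "a \<le> 1"
  shows "summable (\<lambda>r. stable_poisson_coeff a c m r * t ^ r)"
proof (rule summable_comparison_test')
  show "summable (\<lambda>r. 2 ^ m * ((2 * \<bar>c\<bar> * \<bar>t\<bar>) ^ r / fact r))"
    by (intro summable_mult sums_summable[OF exp_sums_real])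
  show "norm (stable_poisson_coeff a c m r * t ^ r) \<le> 2 ^ m * ((2 * \<bar>c\<bar> * \<bar>t\<bar>) ^ r / fact r)" for r
    using abs_stable_poisson_coeff_le[OF assms] by simp
qed

lemma stable_poisson_prob_sums:
  assumes "0 \<le> a" "a \<le> 1"
  shows "(\<lambda>r. stable_poisson_coeff a c m r * t ^ r) sums stable_poisson_prob a c m t"
  unfolding stable_poisson_prob_def by (rule summable_sums[OF summable_stable_poisson_coeff[OF assms]])

lemma stable_poisson_prob_generating_function:
  assumes "0 \<le> a" "a \<le> 1" "\<bar>u\<bar> < 1 / 2"
  shows "(\<lambda>m. stable_poisson_prob a c m t * u ^ m) sums exp (- (c * t) * (1 - u) powr a)"
proof -
  define f where "f r m = stable_poisson_coeff a c m r * t ^ r * u ^ m" for r m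
  have bound: "\<bar>f r m\<bar> \<le> (2 * \<bar>c\<bar> * \<bar>t\<bar>) ^ r / fact r * (2 * \<bar>u\<bar>) ^ m" for r m
  proof -
    have "\<bar>f r m\<bar> = \<bar>stable_poisson_coeff a c m r * t ^ r\<bar> * \<bar>u\<bar> ^ m"
      by (simp add: f_def abs_mult power_abs)
    also have "\<dots> \<le> 2 ^ m * ((2 * \<bar>c\<bar> * \<bar>t\<bar>) ^ r / fact r) * \<bar>u\<bar> ^ m"
      by (intro mult_right_mono abs_stable_poisson_coeff_le assms) simp
    also have "\<dots> = (2 * \<bar>c\<bar> * \<bar>t\<bar>) ^ r / fact r * (2 * \<bar>u\<bar>) ^ m"
      by (simp add: power_mult_distrib)
    finally show ?thesis .
  qed
  have row: "(\<lambda>m. f r m) sums ((- (c * t) * (1 - u) powr a) ^ r / fact r)" for r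
  proof -
    have "(\<lambda>m. ((a * real r) gchoose m) * (- u) ^ m) sums (1 + - u) powr (a * real r)"
      by (rule gen_binomial_real) (use assms in simp)
    then have "(\<lambda>m. (- c) ^ r / fact r * t ^ r * (((a * real r) gchoose m) * (- u) ^ m)) sums
        ((- c) ^ r / fact r * t ^ r * (1 + - u) powr (a * real r))"
      by (rule sums_mult)
    moreover have "(\<lambda>m. f r m) = (\<lambda>m. (- c) ^ r / fact r * t ^ r * (((a * real r) gchoose m) * (- u) ^ m))"
      by (simp add: fun_eq_iff f_def stable_poisson_coeff_def power_minus[of u])
    moreover have "(1 + - u) powr (a * real r) = ((1 - u) powr a) ^ r"
      using assms by (simp add: powr_powr[symmetric] powr_realpow)
    moreover have "(- (c * t) * (1 - u) powr a) ^ r = (- c) ^ r * t ^ r * ((1 - u) powr a) ^ r"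
      by (simp only: minus_mult_left power_mult_distrib)
    ultimately show ?thesis
      by (simp add: mult_ac)
  qed
  have col: "(\<lambda>r. f r m) sums (stable_poisson_prob a c m t * u ^ m)" for m
    unfolding f_def by (rule sums_mult2[OF stable_poisson_prob_sums[OF assms(1,2)]])
  show ?thesis
  proof (rule sums_swap_dominated[OF bound _ _ _ _ row col exp_sums_real])
    show "summable (\<lambda>m. (2 * \<bar>u\<bar>) ^ m)"
      by (rule summable_geometric) (use assms in simp)
  qed (auto intro: sums_summable[OF exp_sums_real])
qed

lemma diffs_stable_poisson_coeff:
  "diffs (stable_poisson_coeff a c m) r
     = - c * (\<Sum>k=0..m. (-1) ^ k * (a gchoose k) * stable_poisson_coeff a c (m - k) r)"
proof -
  \<comment> \<open>Vandermonde: a (r + 1) = a + a r splits the binomial coefficient into a convolution.\<close>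
  have vandermonde: "(a + a * real r) gchoose m = (\<Sum>k=0..m. (a gchoose k) * ((a * real r) gchoose (m - k)))"
    by (rule gbinomial_Vandermonde[symmetric])
  have sign: "(-1::real) ^ m = (-1) ^ k * (-1) ^ (m - k)" if "k \<in> {0..m}" for k
    using that by (simp add: power_add[symmetric])
  have "real (Suc r) * ((- c) ^ Suc r / fact (Suc r)) = - c * ((- c) ^ r / fact r)"
    by (simp add: fact_Suc field_simps del: of_nat_Suc)
  moreover have "a * real (Suc r) = a + a * real r"
    by (simp add: algebra_simps)
  ultimately have "diffs (stable_poisson_coeff a c m) r
      = - c * ((- c) ^ r / fact r * ((-1) ^ m * ((a + a * real r) gchoose m)))"
    by (simp add: diffs_def stable_poisson_coeff_def del: of_nat_Suc)
  also have "\<dots> = - c * (\<Sum>k=0..m. (- c) ^ r / fact r * ((-1) ^ k * (-1) ^ (m - k)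
      * ((a gchoose k) * ((a * real r) gchoose (m - k)))))"
    unfolding vandermonde sum_distrib_left by (intro arg_cong[where f = "\<lambda>x. - c * x"] sum.cong refl) (simp add: sign)
  also have "\<dots> = - c * (\<Sum>k=0..m. (-1) ^ k * (a gchoose k) * stable_poisson_coeff a c (m - k) r)"
    by (simp add: stable_poisson_coeff_def mult_ac)
  finally show ?thesis .
qed

lemma has_real_derivative_stable_poisson_prob:
  assumes "0 \<le> a" "a \<le> 1"
  shows "(stable_poisson_prob a c m has_real_derivative
           - c * (\<Sum>k=0..m. (-1) ^ k * (a gchoose k) * stable_poisson_prob a c (m - k) t)) (at t)"
proof -
  define \<beta> where "\<beta> k = (-1) ^ k * (a gchoose k)" for k
  have summable: "summable (\<lambda>r. \<beta> k * (stable_poisson_coeff a c (m - k) r * t ^ r))" for k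
    by (intro summable_mult summable_stable_poisson_coeff assms)
  have "(stable_poisson_prob a c m has_real_derivative (\<Sum>r. diffs (stable_poisson_coeff a c m) r * t ^ r)) (at t)"
    unfolding stable_poisson_prob_def[abs_def]
    by (intro termdiffs_strong_converges_everywhere summable_stable_poisson_coeff assms)
  also have "(\<Sum>r. diffs (stable_poisson_coeff a c m) r * t ^ r)
      = (\<Sum>r. - c * (\<Sum>k=0..m. \<beta> k * (stable_poisson_coeff a c (m - k) r * t ^ r)))"
    by (simp add: diffs_stable_poisson_coeff \<beta>_def sum_distrib_left sum_distrib_right mult_ac)
  also have "\<dots> = - c * (\<Sum>r. \<Sum>k=0..m. \<beta> k * (stable_poisson_coeff a c (m - k) r * t ^ r))"
    by (intro suminf_mult summable_sum summable)
  also have "(\<Sum>r. \<Sum>k=0..m. \<beta> k * (stable_poisson_coeff a c (m - k) r * t ^ r))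
      = (\<Sum>k=0..m. \<Sum>r. \<beta> k * (stable_poisson_coeff a c (m - k) r * t ^ r))"
    by (intro suminf_sum summable)
  also have "\<dots> = (\<Sum>k=0..m. \<beta> k * stable_poisson_prob a c (m - k) t)"
    using summable_stable_poisson_coeff[OF assms]
    by (simp add: suminf_mult stable_poisson_prob_def)
  finally show ?thesis
    by (simp add: \<beta>_def)
qed

lemma stable_poisson_prob_Gamma:
  assumes "0 \<le> a" "a \<le> 1"
  shows "stable_poisson_prob a c m t = (-1) ^ m / fact m *
     (\<Sum>r. (- c * t) ^ r * Gamma (a * real r + 1) / (fact r * Gamma (a * real r + 1 - real m)))"
proof -
  define X where "X r = (- c * t) ^ r * Gamma (a * real r + 1) / (fact r * Gamma (a * real r + 1 - real m))"
    for r
  have coeff_eq: "stable_poisson_coeff a c m r * t ^ r = (-1) ^ m / fact m * X r" for r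
    using assms unfolding stable_poisson_coeff_def X_def power_mult_distrib[of "- c" t]
    by (simp add: gbinomial_Gamma_nonneg mult_ac)
  have "summable (\<lambda>r. (-1) ^ m * fact m * (stable_poisson_coeff a c m r * t ^ r))"
    by (intro summable_mult summable_stable_poisson_coeff assms)
  moreover have "(-1) ^ m * fact m * ((-1) ^ m / fact m * X r) = X r" for r
    by (simp flip: power_add)
  ultimately have "summable X"
    unfolding coeff_eq by simp
  then show ?thesis
    unfolding stable_poisson_prob_def coeff_eq X_def by (rule suminf_mult[unfolded X_def])
qed

definition poisson_weight :: "real \<Rightarrow> nat \<Rightarrow> real" where
  "poisson_weight x m = exp (- x) * x ^ m / fact m"

lemma poisson_weight_nonneg: "0 \<le> x \<Longrightarrow> 0 \<le> poisson_weight x m"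
  by (simp add: poisson_weight_def)

lemma poisson_weight_sums: "(\<lambda>m. poisson_weight x m * u ^ m) sums exp (- ((1 - u) * x))"
proof -
  have "(\<lambda>m. exp (- x) * ((x * u) ^ m / fact m)) sums (exp (- x) * exp (x * u))"
    by (rule sums_mult[OF exp_sums_real])
  moreover have "exp (- x) * exp (x * u) = exp (- ((1 - u) * x))"
    by (simp add: exp_add[symmetric] algebra_simps)
  ultimately show ?thesis
    by (simp add: poisson_weight_def power_mult_distrib mult_ac)
qed

lemma poisson_weight_le_1:
  assumes "0 \<le> x"
  shows "poisson_weight x m \<le> 1"
proof -
  have "poisson_weight x m * 1 ^ m \<le> (\<Sum>k. poisson_weight x k * 1 ^ k)"
    using poisson_weight_sums[of x 1] assms
    by (intro sum_le_suminf[of _ "{m}", simplified]) (auto simp: sums_iff poisson_weight_nonneg)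
  then show ?thesis
    using sums_unique[OF poisson_weight_sums[of x 1]] by simp
qed

definition compositions :: "'i set \<Rightarrow> nat \<Rightarrow> ('i \<Rightarrow> nat) set" where
  "compositions I n = {m. (\<forall>i. i \<notin> I \<longrightarrow> m i = 0) \<and> sum m I = n}"

lemma finite_compositions:
  assumes "finite I"
  shows "finite (compositions I n)"
proof (rule finite_subset)
  have "m i \<le> sum m I" if "i \<in> I" for m :: "_ \<Rightarrow> nat" and i
    using that assms by (intro member_le_sum) auto
  then show "compositions I n \<subseteq> {m. \<forall>i. (i \<in> I \<longrightarrow> m i \<in> {0..n}) \<and> (i \<notin> I \<longrightarrow> m i = 0)}"
    by (auto simp: compositions_def)
  show "finite {m. \<forall>i. (i \<in> I \<longrightarrow> m i \<in> {0..n}) \<and> (i \<notin> I \<longrightarrow> m i = (0::nat))}"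
    by (rule finite_set_of_finite_funs) (use assms in auto)
qed

lemma power_add_div_fact:
  fixes x y :: "'a::field_char_0"
  shows "(x + y) ^ n / fact n = (\<Sum>k\<le>n. x ^ k / fact k * (y ^ (n - k) / fact (n - k)))"
  unfolding binomial_ring sum_divide_distrib
  by (intro sum.cong refl) (simp add: binomial_fact field_simps)

lemma multinomial_compositions:
  fixes a :: "'i \<Rightarrow> 'a::field_char_0"
  assumes "finite I"
  shows "sum a I ^ n / fact n = (\<Sum>m\<in>compositions I n. \<Prod>i\<in>I. a i ^ m i / fact (m i))"
  using assms
proof (induction I arbitrary: n rule: finite_induct)
  case empty
  have "compositions ({} :: 'i set) n = (if n = 0 then {\<lambda>_. 0} else {})"
    by (auto simp: compositions_def)
  then show ?case
    by simp
next
  case (insert j I)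
  define P where "P m = (\<Prod>i\<in>I. a i ^ m i / fact (m i))" for m
  have sum_upd: "sum (m(j := k)) I = sum m I" for m :: "'i \<Rightarrow> nat" and k
    using insert.hyps by (intro sum.cong) auto
  have P_upd: "P (m(j := k)) = P m" for m k
    unfolding P_def using insert.hyps by (intro prod.cong) auto
  have "sum a (insert j I) ^ n / fact n = (\<Sum>k\<le>n. a j ^ k / fact k * (sum a I ^ (n - k) / fact (n - k)))"
    using insert.hyps by (simp add: power_add_div_fact)
  also have "\<dots> = (\<Sum>(k, m)\<in>(SIGMA k:{..n}. compositions I (n - k)). a j ^ k / fact k * P m)"
    by (simp add: insert.IH P_def sum_distrib_left sum.Sigma finite_compositions insert.hyps)
  also have "\<dots> = (\<Sum>m\<in>compositions (insert j I) n. a j ^ m j / fact (m j) * P m)"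
  proof (rule sum.reindex_bij_witness[of _ "\<lambda>m. (m j, m(j := 0))" "\<lambda>(k, m). m(j := k)"])
    fix km assume "km \<in> (SIGMA k:{..n}. compositions I (n - k))"
    then obtain k m where km: "km = (k, m)" "k \<le> n" "m \<in> compositions I (n - k)"
      by blast
    then have "m j = 0"
      using insert.hyps by (auto simp: compositions_def)
    then show "(\<lambda>m. (m j, m(j := 0))) ((\<lambda>(k, m). m(j := k)) km) = km"
      using km by auto
    show "(\<lambda>(k, m). m(j := k)) km \<in> compositions (insert j I) n"
      using km insert.hyps sum_upd by (auto simp: compositions_def)
    show "a j ^ ((\<lambda>(k, m). m(j := k)) km) j / fact (((\<lambda>(k, m). m(j := k)) km) j) * P ((\<lambda>(k, m). m(j := k)) km)
        = (\<lambda>(k, m). a j ^ k / fact k * P m) km"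
      using km by (simp add: P_upd)
  next
    fix m assume m: "m \<in> compositions (insert j I) n"
    show "(\<lambda>(k, m). m(j := k)) (m j, m(j := 0)) = m"
      by simp
    show "(m j, m(j := 0)) \<in> (SIGMA k:{..n}. compositions I (n - k))"
      using m insert.hyps sum_upd[of m 0] by (auto simp: compositions_def)
  qed
  also have "\<dots> = (\<Sum>m\<in>compositions (insert j I) n. \<Prod>i\<in>insert j I. a i ^ m i / fact (m i))"
    using insert.hyps by (simp add: P_def)
  finally show ?case .
qed

lemma Theta_eq_compositions: "Theta n = compositions (UNIV :: 'd::finite set) n"
proof -
  have "m i \<le> sum m UNIV" for m :: "'d \<Rightarrow> nat" and i
    by (rule member_le_sum) auto
  then show ?thesis
    by (auto simp: Theta_def compositions_def)
qed

lemma finite_Theta: "finite (Theta n :: ('d::finite \<Rightarrow> nat) set)"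
  unfolding Theta_eq_compositions by (rule finite_compositions) simp

lemma poisson_weight_sum:
  fixes b :: "'d::finite \<Rightarrow> real"
  shows "poisson_weight (\<Sum>i\<in>UNIV. b i) n = (\<Sum>m\<in>Theta n. \<Prod>i\<in>UNIV. poisson_weight (b i) (m i))"
proof -
  have "poisson_weight (\<Sum>i\<in>UNIV. b i) n = (\<Prod>i\<in>UNIV. exp (- b i)) * ((\<Sum>i\<in>UNIV. b i) ^ n / fact n)"
    by (simp add: poisson_weight_def exp_sum[symmetric] sum_negf)
  also have "\<dots> = (\<Sum>m\<in>Theta n. (\<Prod>i\<in>UNIV. exp (- b i)) * (\<Prod>i\<in>UNIV. b i ^ m i / fact (m i)))"
    by (simp add: Theta_eq_compositions multinomial_compositions sum_distrib_left)
  also have "\<dots> = (\<Sum>m\<in>Theta n. \<Prod>i\<in>UNIV. poisson_weight (b i) (m i))"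
    by (simp add: poisson_weight_def prod.distrib[symmetric] mult_ac)
  finally show ?thesis .
qed

lemma sum_Theta_convolution:
  fixes Q :: "'d::finite \<Rightarrow> nat \<Rightarrow> 'a::comm_semiring_1"
  shows "(\<Sum>m\<in>Theta n. (\<Sum>k=0..m j. \<beta> k * Q j (m j - k)) * (\<Prod>i\<in>UNIV-{j}. Q i (m i)))
       = (\<Sum>r=0..n. \<beta> r * (\<Sum>m\<in>Theta (n - r). \<Prod>i\<in>UNIV. Q i (m i)))"
proof -
  have prod_upd: "(\<Prod>i\<in>UNIV. Q i ((m(j := x)) i)) = Q j x * (\<Prod>i\<in>UNIV-{j}. Q i (m i))" for m x
    by (subst prod.remove[of UNIV j]) (auto intro!: prod.cong)
  have sum_upd: "sum (m(j := x)) UNIV + m j = sum m UNIV + x" for m :: "'d \<Rightarrow> nat" and x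
    using sum.remove[of UNIV j m] sum.remove[of UNIV j "m(j := x)"]
      sum.cong[of "UNIV - {j}" _ "m(j := x)" m] by simp
  have m_le: "m j \<le> sum m UNIV" for m :: "'d \<Rightarrow> nat"
    by (rule member_le_sum) auto
  have "(\<Sum>m\<in>Theta n. (\<Sum>k=0..m j. \<beta> k * Q j (m j - k)) * (\<Prod>i\<in>UNIV-{j}. Q i (m i)))
      = (\<Sum>(m, k)\<in>(SIGMA m:Theta n. {0..m j}). \<beta> k * (\<Prod>i\<in>UNIV. Q i ((m(j := m j - k)) i)))"
    unfolding prod_upd by (simp add: sum.Sigma finite_Theta sum_distrib_right mult.assoc)
  \<comment> \<open>Moving k units from coordinate j to the new index r maps Theta n onto the union of the Theta (n - r).\<close>
  also have "\<dots> = (\<Sum>(r, m)\<in>(SIGMA r:{0..n}. Theta (n - r)). \<beta> r * (\<Prod>i\<in>UNIV. Q i (m i)))"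
  proof (rule sum.reindex_bij_witness[of _ "\<lambda>(r, m). (m(j := m j + r), r)" "\<lambda>(m, k). (k, m(j := m j - k))"])
    fix mk :: "('d \<Rightarrow> nat) \<times> nat"
    assume "mk \<in> (SIGMA m:Theta n. {0..m j})"
    then obtain m k where mk: "mk = (m, k)" "sum m UNIV = n" "k \<le> m j"
      by (auto simp: Theta_eq_compositions compositions_def)
    then show "(\<lambda>(r, m). (m(j := m j + r), r)) ((\<lambda>(m, k). (k, m(j := m j - k))) mk) = mk"
      by auto
    have "sum (m(j := m j - k)) UNIV = n - k"
      using sum_upd[of m "m j - k"] mk by simp
    then show "(\<lambda>(m, k). (k, m(j := m j - k))) mk \<in> (SIGMA r:{0..n}. Theta (n - r))"
      using mk m_le[of m] by (auto simp: Theta_eq_compositions compositions_def)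
  next
    fix rm :: "nat \<times> ('d \<Rightarrow> nat)"
    assume "rm \<in> (SIGMA r:{0..n}. Theta (n - r))"
    then obtain r m where rm: "rm = (r, m)" "sum m UNIV = n - r" "r \<le> n"
      by (auto simp: Theta_eq_compositions compositions_def)
    then show "(\<lambda>(m, k). (k, m(j := m j - k))) ((\<lambda>(r, m). (m(j := m j + r), r)) rm) = rm"
      by auto
    have "sum (m(j := m j + r)) UNIV = n"
      using sum_upd[of m "m j + r"] rm by simp
    then show "(\<lambda>(r, m). (m(j := m j + r), r)) rm \<in> (SIGMA m:Theta n. {0..m j})"
      using rm by (auto simp: Theta_eq_compositions compositions_def)
  qed (auto simp: fun_upd_idem)
  also have "\<dots> = (\<Sum>r=0..n. \<beta> r * (\<Sum>m\<in>Theta (n - r). \<Prod>i\<in>UNIV. Q i (m i)))"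
    by (simp add: sum.Sigma[symmetric] finite_Theta sum_distrib_left)
  finally show ?thesis .
qed

definition stable_mpoisson_prob :: "('d::finite \<Rightarrow> real) \<Rightarrow> ('d \<Rightarrow> real) \<Rightarrow> nat \<Rightarrow> real \<Rightarrow> real" where
  "stable_mpoisson_prob a c n t = (\<Sum>m\<in>Theta n. \<Prod>i\<in>UNIV. stable_poisson_prob (a i) (c i) (m i) t)"

lemma has_real_derivative_stable_mpoisson_prob:
  assumes "\<And>i. 0 \<le> a i" "\<And>i. a i \<le> 1"
  shows "(stable_mpoisson_prob a c n has_real_derivative
           - (\<Sum>j\<in>UNIV. c j * (\<Sum>r=0..n. (-1) ^ r * Gamma (a j + 1) / (fact r * Gamma (a j + 1 - real r))
                * stable_mpoisson_prob a c (n - r) t)))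
         (at t)"
proof -
  define Q where "Q i k = stable_poisson_prob (a i) (c i) k t" for i k
  define \<beta> where "\<beta> j k = - c j * ((-1) ^ k * (a j gchoose k))" for j k
  have "(stable_poisson_prob (a i) (c i) k has_real_derivative (\<Sum>l=0..k. \<beta> i l * Q i (k - l))) (at t)" for i k
    using has_real_derivative_stable_poisson_prob[OF assms, of i "c i" k t]
    by (simp add: \<beta>_def Q_def sum_distrib_left mult_ac)
  then have deriv: "(stable_mpoisson_prob a c n has_real_derivative
      (\<Sum>m\<in>Theta n. \<Sum>j\<in>UNIV. (\<Sum>l=0..m j. \<beta> j l * Q j (m j - l)) * (\<Prod>i\<in>UNIV-{j}. Q i (m i)))) (at t)"
    unfolding stable_mpoisson_prob_def[abs_def] Q_def
    by (intro DERIV_sum has_field_derivative_prod)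
  have "(\<Sum>m\<in>Theta n. \<Sum>j\<in>UNIV. (\<Sum>l=0..m j. \<beta> j l * Q j (m j - l)) * (\<Prod>i\<in>UNIV-{j}. Q i (m i)))
      = (\<Sum>j\<in>UNIV. \<Sum>m\<in>Theta n. (\<Sum>l=0..m j. \<beta> j l * Q j (m j - l)) * (\<Prod>i\<in>UNIV-{j}. Q i (m i)))"
    by (rule sum.swap)
  also have "\<dots> = (\<Sum>j\<in>UNIV. \<Sum>r=0..n. \<beta> j r * (\<Sum>m\<in>Theta (n - r). \<Prod>i\<in>UNIV. Q i (m i)))"
    by (simp only: sum_Theta_convolution)
  also have "\<dots> = - (\<Sum>j\<in>UNIV. c j * (\<Sum>r=0..n. (-1) ^ r * Gamma (a j + 1) / (fact r * Gamma (a j + 1 - real r))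
      * stable_mpoisson_prob a c (n - r) t))"
    using assms(1) by (simp add: stable_mpoisson_prob_def Q_def \<beta>_def gbinomial_Gamma_nonneg sum_distrib_left sum_negf mult_ac)
  finally show ?thesis
    using deriv by simp
qed

lemma (in prob_space) indep_sets_option_prob_Int:
  fixes F :: "'i::finite option \<Rightarrow> 'a set set"
  assumes indep: "indep_sets F UNIV" and "G \<in> F None" and "\<And>i. C i \<in> F (Some i)"
  shows "prob (G \<inter> (\<Inter>i. C i)) = prob G * prob (\<Inter>i. C i)"
proof -
  define A where "A k = (case k of None \<Rightarrow> G | Some i \<Rightarrow> C i)" for k
  have A: "A k \<in> F k" for k
    using assms by (auto simp: A_def split: option.split)
  have "prob (\<Inter>k\<in>UNIV. A k) = (\<Prod>k\<in>UNIV. prob (A k))"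
    using A by (intro indep_setsD[OF indep]) auto
  moreover have "prob (\<Inter>k\<in>Some ` UNIV. A k) = (\<Prod>k\<in>Some ` UNIV. prob (A k))"
    using A by (intro indep_setsD[OF indep]) auto
  moreover have "(\<Inter>k\<in>UNIV. A k) = G \<inter> (\<Inter>i. C i)" and "(\<Inter>k\<in>Some ` UNIV. A k) = (\<Inter>i. C i)"
    by (auto simp: A_def UNIV_option_conv)
  moreover have "(\<Prod>k\<in>UNIV. prob (A k)) = prob G * (\<Prod>k\<in>Some ` UNIV. prob (A k))"
    by (simp add: UNIV_option_conv A_def)
  ultimately show ?thesis
    by simp
qed

lemma (in prob_space) indep_vars_of_indep_sets_option:
  fixes F :: "'i option \<Rightarrow> 'a set set"
  assumes indep: "indep_sets F UNIV" and X: "\<And>i. X i \<in> measurable M (M' i)"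
    and F: "\<And>i. F (Some i) = sets (vimage_algebra (space M) (X i) (M' i))"
  shows "indep_vars M' X UNIV"
  unfolding indep_vars_def2
proof (intro conjI ballI indep_setsI)
  show "random_variable (M' i) (X i)" for i
    by (rule X)
  show "{X i -` A \<inter> space M |A. A \<in> sets (M' i)} \<subseteq> events" for i
    using X[of i] by (auto intro: measurable_sets)
next
  fix A :: "'i \<Rightarrow> 'a set" and J :: "'i set"
  assume J: "J \<noteq> {}" "finite J" and A: "\<forall>j\<in>J. A j \<in> {X j -` A \<inter> space M |A. A \<in> sets (M' j)}"
  have A_F: "A j \<in> F (Some j)" if "j \<in> J" for j
    using A that X[of j] by (auto simp: F sets_vimage_algebra2 measurable_space)
  define A' where "A' k = (case k of None \<Rightarrow> {} | Some j \<Rightarrow> A j)" for k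
  have "prob (\<Inter>k\<in>Some ` J. A' k) = (\<Prod>k\<in>Some ` J. prob (A' k))"
    using J A_F by (intro indep_setsD[OF indep]) (auto simp: A'_def)
  then show "prob (\<Inter>j\<in>J. A j) = (\<Prod>j\<in>J. prob (A j))"
    by (simp add: A'_def prod.reindex)
qed

lemma (in prob_space) prob_eq_integral_indep_discrete:
  fixes D :: "'a \<Rightarrow> 'b::countable"
  assumes D: "D \<in> measurable M (count_space UNIV)" and G: "\<And>d. G d \<in> events"
    and indep: "\<And>d. prob (G d \<inter> {\<omega> \<in> space M. D \<omega> = d}) = prob (G d) * prob {\<omega> \<in> space M. D \<omega> = d}"
  shows "prob {\<omega> \<in> space M. \<omega> \<in> G (D \<omega>)} = (\<integral>\<omega>. prob (G (D \<omega>)) \<partial>M)"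
proof -
  define B where "B d = {\<omega> \<in> space M. D \<omega> = d}" for d
  have B: "B d \<in> events" for d
    using measurable_sets[OF D, of "{d}"] by (simp add: B_def vimage_def Int_def conj_commute)
  have prob_D_meas: "(\<lambda>\<omega>. prob (G (D \<omega>))) \<in> borel_measurable M"
    using measurable_compose[OF D borel_measurable_count_space] .
  have "G d \<subseteq> space M" for d
    using G by (rule sets.sets_into_space)
  then have "{\<omega> \<in> space M. \<omega> \<in> G (D \<omega>)} = (\<Union>d. G d \<inter> B d)"
    by (auto simp: B_def)
  then have "emeasure M {\<omega> \<in> space M. \<omega> \<in> G (D \<omega>)} = emeasure M (\<Union>d. G d \<inter> B d)"
    by simp
  also have "\<dots> = (\<integral>\<^sup>+d. emeasure M (G d \<inter> B d) \<partial>count_space UNIV)"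
    using G B by (intro emeasure_UN_countable) (auto simp: disjoint_family_on_def B_def)
  also have "\<dots> = (\<integral>\<^sup>+d. \<integral>\<^sup>+\<omega>. ennreal (prob (G d)) * indicator (B d) \<omega> \<partial>M \<partial>count_space UNIV)"
    using B by (simp add: emeasure_eq_measure indep B_def ennreal_mult nn_integral_cmult_indicator)
  also have "\<dots> = (\<integral>\<^sup>+\<omega>. \<integral>\<^sup>+d. ennreal (prob (G d)) * indicator (B d) \<omega> \<partial>count_space UNIV \<partial>M)"
    using B by (intro nn_integral_count_space_nn_integral[symmetric]) auto
  also have "\<dots> = (\<integral>\<^sup>+\<omega>. ennreal (prob (G (D \<omega>))) \<partial>M)"
  proof (rule nn_integral_cong)
    fix \<omega> assume "\<omega> \<in> space M"
    then have "(\<lambda>d. ennreal (prob (G d)) * indicator (B d) \<omega>) = (\<lambda>d. ennreal (prob (G d)) * indicator {D \<omega>} d)"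
      by (auto simp: B_def split: split_indicator)
    then show "(\<integral>\<^sup>+d. ennreal (prob (G d)) * indicator (B d) \<omega> \<partial>count_space UNIV) = ennreal (prob (G (D \<omega>)))"
      by simp
  qed
  also have "\<dots> = ennreal (\<integral>\<omega>. prob (G (D \<omega>)) \<partial>M)"
    using prob_D_meas by (intro nn_integral_eq_integral integrable_const_bound[where B = 1]) auto
  finally show ?thesis
    by (simp add: emeasure_eq_measure)
qed

lemma (in prob_space) integral_poisson_weight_sums:
  assumes Y: "Y \<in> borel_measurable M" and Y_nonneg: "\<And>\<omega>. \<omega> \<in> space M \<Longrightarrow> 0 \<le> Y \<omega>"
    and u: "0 \<le> u" "u \<le> 1"
  shows "(\<lambda>m. (\<integral>\<omega>. poisson_weight (Y \<omega>) m \<partial>M) * u ^ m) sums (\<integral>\<omega>. exp (- ((1 - u) * Y \<omega>)) \<partial>M)"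
proof -
  define f where "f m \<omega> = poisson_weight (Y \<omega>) m * u ^ m" for m \<omega>
  have f_meas: "f m \<in> borel_measurable M" for m
    unfolding f_def poisson_weight_def using Y by measurable
  have f_nonneg: "0 \<le> f m \<omega>" if "\<omega> \<in> space M" for m \<omega>
    using Y_nonneg[OF that] u by (simp add: f_def poisson_weight_nonneg)
  have f_sums: "(\<lambda>m. f m \<omega>) sums exp (- ((1 - u) * Y \<omega>))" for \<omega>
    unfolding f_def by (rule poisson_weight_sums)
  have partial_le: "(\<Sum>m<n. f m \<omega>) \<le> 1" if "\<omega> \<in> space M" for n \<omega>
  proof -
    have "(\<Sum>m<n. f m \<omega>) \<le> (\<Sum>m. f m \<omega>)"
      using f_sums[of \<omega>] f_nonneg[OF that] by (intro sum_le_suminf) (auto simp: sums_iff)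
    also have "\<dots> = exp (- ((1 - u) * Y \<omega>))"
      using f_sums[of \<omega>] by (simp add: sums_iff)
    also have "\<dots> \<le> 1"
      using Y_nonneg[OF that] u by simp
    finally show ?thesis .
  qed
  have f_le: "f m \<omega> \<le> 1" if "\<omega> \<in> space M" for m \<omega>
    unfolding f_def using Y_nonneg[OF that] u
    by (intro mult_le_one poisson_weight_le_1 poisson_weight_nonneg power_le_one) auto
  have f_int: "integrable M (f m)" for m
    using f_le f_nonneg f_meas by (intro integrable_const_bound[where B = 1]) auto
  have "summable (\<lambda>m. \<integral>\<omega>. norm (f m \<omega>) \<partial>M)"
  proof (rule summableI_nonneg_bounded[where x = 1])
    show "(\<Sum>m<n. \<integral>\<omega>. norm (f m \<omega>) \<partial>M) \<le> 1" for n
    proof -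
      have "(\<integral>\<omega>. norm (f m \<omega>) \<partial>M) = integral\<^sup>L M (f m)" for m
        using f_nonneg by (intro Bochner_Integration.integral_cong) auto
      then have "(\<Sum>m<n. \<integral>\<omega>. norm (f m \<omega>) \<partial>M) = (\<integral>\<omega>. (\<Sum>m<n. f m \<omega>) \<partial>M)"
        using f_int by (simp add: Bochner_Integration.integral_sum)
      also have "\<dots> \<le> (\<integral>\<omega>. 1 \<partial>M)"
        using partial_le f_int by (intro integral_mono) auto
      finally show ?thesis
        by (simp add: prob_space)
    qed
  qed simp
  then have "(\<lambda>m. integral\<^sup>L M (f m)) sums (\<integral>\<omega>. (\<Sum>m. f m \<omega>) \<partial>M)"
    using f_sums f_nonneg by (intro sums_integral f_int AE_I2) (auto simp: sums_iff)
  moreover have "(\<integral>\<omega>. (\<Sum>m. f m \<omega>) \<partial>M) = (\<integral>\<omega>. exp (- ((1 - u) * Y \<omega>)) \<partial>M)"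
    using f_sums by (simp add: sums_iff)
  moreover have "integral\<^sup>L M (f m) = (\<integral>\<omega>. poisson_weight (Y \<omega>) m \<partial>M) * u ^ m" for m
    unfolding f_def by (rule integral_mult_left_zero)
  ultimately show ?thesis
    by simp
qed

lemma (in prob_space) integral_poisson_weight_stable:
  assumes Y: "Y \<in> borel_measurable M" and Y_nonneg: "\<And>\<omega>. \<omega> \<in> space M \<Longrightarrow> 0 \<le> Y \<omega>"
    and "0 < lam" "0 \<le> a" "a \<le> 1"
    and laplace: "\<And>w. 0 < w \<Longrightarrow> (\<integral>\<omega>. exp (- w * Y \<omega>) \<partial>M) = exp (- t * w powr a)"
  shows "(\<integral>\<omega>. poisson_weight (lam * Y \<omega>) m \<partial>M) = stable_poisson_prob a (lam powr a) m t"
proof -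
  have "(\<lambda>m. \<integral>\<omega>. poisson_weight (lam * Y \<omega>) m \<partial>M) = (\<lambda>m. stable_poisson_prob a (lam powr a) m t)"
  proof (rule powser_coeffs_unique_at_right[where e = "1 / 2"])
    fix u :: real assume u: "0 < u" "u < 1 / 2"
    have "(\<integral>\<omega>. exp (- ((1 - u) * (lam * Y \<omega>))) \<partial>M) = exp (- t * (lam * (1 - u)) powr a)"
      using laplace[of "lam * (1 - u)"] \<open>0 < lam\<close> u by (simp add: mult_ac)
    also have "\<dots> = exp (- (lam powr a * t) * (1 - u) powr a)"
      using \<open>0 < lam\<close> u by (simp add: powr_mult mult_ac)
    finally show "(\<lambda>m. (\<integral>\<omega>. poisson_weight (lam * Y \<omega>) m \<partial>M) * u ^ m) sums exp (- (lam powr a * t) * (1 - u) powr a)"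
      using integral_poisson_weight_sums[of "\<lambda>\<omega>. lam * Y \<omega>" u] Y Y_nonneg \<open>0 < lam\<close> u by simp
    show "(\<lambda>m. stable_poisson_prob a (lam powr a) m t * u ^ m) sums exp (- (lam powr a * t) * (1 - u) powr a)"
      using u by (intro stable_poisson_prob_generating_function assms) simp
  qed simp
  then show ?thesis
    by (rule fun_cong)
qed

lemma (in prob_space) integral_poisson_weight_sum_indep:
  fixes Y :: "'d::finite \<Rightarrow> 'a \<Rightarrow> real"
  assumes indep: "indep_vars (\<lambda>_. borel) Y UNIV" and Y_nonneg: "\<And>i \<omega>. \<omega> \<in> space M \<Longrightarrow> 0 \<le> Y i \<omega>"
  shows "(\<integral>\<omega>. poisson_weight (\<Sum>i\<in>UNIV. Y i \<omega>) n \<partial>M)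
       = (\<Sum>m\<in>Theta n. \<Prod>i\<in>UNIV. \<integral>\<omega>. poisson_weight (Y i \<omega>) (m i) \<partial>M)"
proof -
  define W where "W m i \<omega> = poisson_weight (Y i \<omega>) (m i)" for m :: "'d \<Rightarrow> nat" and i \<omega>
  have Y_meas: "Y i \<in> borel_measurable M" for i
    using indep by (simp add: indep_vars_def)
  have W_indep: "indep_vars (\<lambda>_. borel) (W m) UNIV" for m
    unfolding W_def poisson_weight_def by (rule indep_vars_compose2[OF indep]) measurable
  have W_meas: "W m i \<in> borel_measurable M" for m i
    unfolding W_def poisson_weight_def using Y_meas[of i] by measurable
  have W_bound: "\<bar>W m i \<omega>\<bar> \<le> 1" if "\<omega> \<in> space M" for m i \<omega>
    using Y_nonneg[OF that]
    by (simp add: W_def abs_of_nonneg[OF poisson_weight_nonneg] poisson_weight_le_1)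
  have W_int: "integrable M (W m i)" for m i
    using W_meas W_bound by (intro integrable_const_bound[where B = 1]) auto
  have "(\<integral>\<omega>. poisson_weight (\<Sum>i\<in>UNIV. Y i \<omega>) n \<partial>M) = (\<integral>\<omega>. (\<Sum>m\<in>Theta n. \<Prod>i\<in>UNIV. W m i \<omega>) \<partial>M)"
    by (simp add: W_def poisson_weight_sum)
  also have "\<dots> = (\<Sum>m\<in>Theta n. \<integral>\<omega>. (\<Prod>i\<in>UNIV. W m i \<omega>) \<partial>M)"
    using W_indep W_int by (intro Bochner_Integration.integral_sum indep_vars_integrable) auto
  also have "\<dots> = (\<Sum>m\<in>Theta n. \<Prod>i\<in>UNIV. \<integral>\<omega>. W m i \<omega> \<partial>M)"
    using W_indep W_int by (intro sum.cong refl indep_vars_lebesgue_integral) auto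
  finally show ?thesis
    by (simp add: W_def)
qed

definition grid_index :: "nat \<Rightarrow> ('d \<Rightarrow> real) \<Rightarrow> 'd \<Rightarrow> int" where
  "grid_index K y = (\<lambda>i. \<lfloor>y i * real (Suc K)\<rfloor>)"

definition grid_point :: "nat \<Rightarrow> ('d \<Rightarrow> int) \<Rightarrow> 'd \<Rightarrow> real" where
  "grid_point K D = (\<lambda>i. real_of_int (D i) / real (Suc K))"

definition grid_round :: "nat \<Rightarrow> ('d \<Rightarrow> real) \<Rightarrow> 'd \<Rightarrow> real" where
  "grid_round K y = grid_point K (grid_index K y)"

lemma grid_point_nonneg: "0 \<le> D i \<Longrightarrow> 0 \<le> grid_point K D i"
  by (simp add: grid_point_def)

lemma grid_index_nonneg: "0 \<le> y i \<Longrightarrow> 0 \<le> grid_index K y i"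
  by (simp add: grid_index_def)

lemma grid_round_nonneg: "0 \<le> y i \<Longrightarrow> 0 \<le> grid_round K y i"
  by (simp add: grid_round_def grid_point_nonneg grid_index_nonneg)

lemma grid_round_le: "grid_round K y i \<le> y i"
  using of_int_floor_le[of "y i * real (Suc K)"]
  by (simp add: grid_round_def grid_point_def grid_index_def divide_le_eq)

lemma le_grid_round: "y i \<le> grid_round K y i + 1 / real (Suc K)"
proof -
  have "y i * real (Suc K) \<le> real_of_int \<lfloor>y i * real (Suc K)\<rfloor> + 1"
    by linarith
  then show ?thesis
    by (simp add: grid_round_def grid_point_def grid_index_def field_simps)
qed

lemma grid_round_tendsto: "(\<lambda>K. grid_round K y i) \<longlonglongrightarrow> y i"
proof (rule tendsto_sandwich[where f = "\<lambda>K. y i - 1 / real (Suc K)" and h = "\<lambda>_. y i"])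
  have "(\<lambda>K. 1 / real (Suc K)) \<longlonglongrightarrow> 0"
    using LIMSEQ_Suc[OF lim_const_over_n[of 1]] by simp
  then show "(\<lambda>K. y i - 1 / real (Suc K)) \<longlonglongrightarrow> y i"
    using tendsto_diff[OF tendsto_const] by fastforce
qed (use grid_round_le le_grid_round in \<open>auto intro!: always_eventually simp: algebra_simps\<close>)

context
  fixes M :: "'a measure" and Lam :: "'d::finite \<Rightarrow> real" and N :: "'a \<Rightarrow> ('d \<Rightarrow> real) \<Rightarrow> nat"
  assumes prob_space_M: "prob_space M" and Lam_pos: "\<And>i. 0 < Lam i" and N: "mp_poisson M Lam N"
begin

interpretation prob_space M
  by (rule prob_space_M)

lemma measurable_mp_poisson_at:
  assumes "Y \<in> measurable M (PiM UNIV (\<lambda>_. borel))"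
  shows "(\<lambda>\<omega>. N \<omega> (Y \<omega>)) \<in> measurable M (count_space UNIV)"
proof -
  have "(\<lambda>(\<omega>, t). N \<omega> t) \<in> measurable (M \<Otimes>\<^sub>M PiM UNIV (\<lambda>_. borel)) (count_space UNIV)"
    using N by (simp add: mp_poisson_def)
  from measurable_compose[OF measurable_Pair[OF measurable_ident_sets[OF refl] assms] this]
  show ?thesis
    by simp
qed

lemma events_mp_poisson_at:
  assumes "Y \<in> measurable M (PiM UNIV (\<lambda>_. borel))" "Y' \<in> measurable M (PiM UNIV (\<lambda>_. borel))"
  shows "{\<omega> \<in> space M. P (N \<omega> (Y \<omega>)) (N \<omega> (Y' \<omega>))} \<in> events"
proof -
  have "(\<lambda>\<omega>. (N \<omega> (Y \<omega>), N \<omega> (Y' \<omega>))) \<in> measurable M (count_space UNIV \<Otimes>\<^sub>M count_space UNIV)"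
    using assms by (intro measurable_Pair measurable_mp_poisson_at)
  moreover have "{(a, b). P a b} \<in> sets (count_space UNIV \<Otimes>\<^sub>M count_space (UNIV :: nat set))"
    by (subst pair_measure_countable) auto
  ultimately have "(\<lambda>\<omega>. (N \<omega> (Y \<omega>), N \<omega> (Y' \<omega>))) -` {(a, b). P a b} \<inter> space M \<in> events"
    by (rule measurable_sets)
  then show ?thesis
    by (simp add: vimage_def Int_def conj_commute)
qed

lemma prob_mp_poisson_eq:
  "(\<And>i. 0 \<le> y i) \<Longrightarrow> prob {\<omega> \<in> space M. N \<omega> y = k} = poisson_weight (\<Sum>i\<in>UNIV. Lam i * y i) k"
  using N by (simp add: mp_poisson_def nonneg_vec_def poisson_weight_def)

lemma mp_poisson_mono:
  "\<omega> \<in> space M \<Longrightarrow> (\<And>i. 0 \<le> y i) \<Longrightarrow> (\<And>i. y i \<le> y' i) \<Longrightarrow> N \<omega> y \<le> N \<omega> y'"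
  using N by (auto simp: mp_poisson_def nonneg_vec_def le_fun_def)

lemma mp_poisson_stationary:
  assumes "\<And>i. 0 \<le> y i" "\<And>i. y i \<le> y' i"
  shows "distr M (count_space UNIV) (\<lambda>\<omega>. N \<omega> y' - N \<omega> y)
       = distr M (count_space UNIV) (\<lambda>\<omega>. N \<omega> (\<lambda>i. y' i - y i))"
proof -
  have stationary: "\<forall>s t. nonneg_vec s \<and> s \<le> t \<longrightarrow>
      distr M (count_space UNIV) (\<lambda>\<omega>. N \<omega> t - N \<omega> s) = distr M (count_space UNIV) (\<lambda>\<omega>. N \<omega> (\<lambda>i. t i - s i))"
    using N by (simp add: mp_poisson_def)
  have "nonneg_vec y \<and> y \<le> y'"
    using assms by (auto simp: nonneg_vec_def le_fun_def)
  then show ?thesis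
    by (rule stationary[THEN spec, THEN spec, THEN mp])
qed

lemma prob_mp_poisson_increment_le:
  assumes y: "\<And>i. 0 \<le> y i" and "0 \<le> h"
  shows "prob {\<omega> \<in> space M. N \<omega> y \<noteq> N \<omega> (\<lambda>i. y i + h)} \<le> h * (\<Sum>i\<in>UNIV. Lam i)"
proof -
  define y' where "y' = (\<lambda>i. y i + h)"
  have y_le: "y i \<le> y' i" for i
    using \<open>0 \<le> h\<close> by (simp add: y'_def)
  have N_meas: "(\<lambda>\<omega>. N \<omega> z) \<in> measurable M (count_space UNIV)" for z
    by (rule measurable_mp_poisson_at) (simp add: space_PiM)
  have pair: "(\<lambda>\<omega>. (N \<omega> y', N \<omega> y)) \<in> measurable M (count_space UNIV \<Otimes>\<^sub>M count_space UNIV)"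
    by (intro measurable_Pair N_meas)
  have minus: "(\<lambda>(a, b). a - b) \<in> measurable (count_space UNIV \<Otimes>\<^sub>M count_space UNIV) (count_space (UNIV :: nat set))"
    by (subst pair_measure_countable) auto
  have incr_meas: "(\<lambda>\<omega>. N \<omega> y' - N \<omega> y) \<in> measurable M (count_space UNIV)"
    using measurable_compose[OF pair minus] by simp
  have increment: "(\<lambda>i. y' i - y i) = (\<lambda>_. h)"
    by (simp add: y'_def)
  have stationary: "distr M (count_space UNIV) (\<lambda>\<omega>. N \<omega> y' - N \<omega> y) = distr M (count_space UNIV) (\<lambda>\<omega>. N \<omega> (\<lambda>_. h))"
    using mp_poisson_stationary[of y y'] y y_le unfolding increment by blast
  have "{\<omega> \<in> space M. N \<omega> y \<noteq> N \<omega> y'} = (\<lambda>\<omega>. N \<omega> y' - N \<omega> y) -` {k. k \<noteq> 0} \<inter> space M"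
  proof -
    have "N \<omega> y \<le> N \<omega> y'" if "\<omega> \<in> space M" for \<omega>
      using mp_poisson_mono[of \<omega> y y'] that y y_le by blast
    then show ?thesis
      by force
  qed
  then have "prob {\<omega> \<in> space M. N \<omega> y \<noteq> N \<omega> y'} = measure (distr M (count_space UNIV) (\<lambda>\<omega>. N \<omega> (\<lambda>_. h))) {k. k \<noteq> 0}"
    by (simp add: measure_distr[OF incr_meas] stationary[symmetric])
  also have "\<dots> = prob (space M - {\<omega> \<in> space M. N \<omega> (\<lambda>_. h) = 0})"
    by (subst measure_distr[OF N_meas]) (auto intro!: arg_cong[where f = prob])
  also have "\<dots> = 1 - prob {\<omega> \<in> space M. N \<omega> (\<lambda>_. h) = 0}"
    using measurable_sets[OF N_meas, of "{0}"] by (intro prob_compl) (simp add: vimage_def Int_def conj_commute)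
  also have "\<dots> = 1 - exp (- (h * (\<Sum>i\<in>UNIV. Lam i)))"
    using \<open>0 \<le> h\<close> by (simp add: prob_mp_poisson_eq poisson_weight_def sum_distrib_left mult.commute)
  also have "\<dots> \<le> h * (\<Sum>i\<in>UNIV. Lam i)"
    using exp_ge_add_one_self[of "- (h * (\<Sum>i\<in>UNIV. Lam i))"] by linarith
  finally show ?thesis
    by (simp add: y'_def)
qed

lemma events_mp_poisson: "{\<omega> \<in> space M. P (N \<omega> y) (N \<omega> y')} \<in> events"
  by (intro events_mp_poisson_at measurable_const) (simp_all add: space_PiM)

lemma mp_poisson_vimage_event:
  "{\<omega> \<in> space M. P (N \<omega> y) (N \<omega> y')} \<in> sets (vimage_algebra (space M) N (PiM UNIV (\<lambda>_. count_space UNIV)))"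
proof -
  have "(\<lambda>f. (f y, f y')) \<in> measurable (PiM UNIV (\<lambda>_. count_space UNIV)) (count_space UNIV \<Otimes>\<^sub>M count_space UNIV)"
    by (intro measurable_Pair measurable_component_singleton) simp_all
  moreover have "{(a, b). P a b} \<in> sets (count_space UNIV \<Otimes>\<^sub>M count_space (UNIV :: nat set))"
    by (subst pair_measure_countable) auto
  ultimately have "(\<lambda>f. (f y, f y')) -` {(a, b). P a b} \<inter> space (PiM UNIV (\<lambda>_. count_space UNIV))
      \<in> sets (PiM UNIV (\<lambda>_. count_space UNIV))"
    by (rule measurable_sets)
  then have "{f. P (f y) (f y')} \<in> sets (PiM UNIV (\<lambda>_. count_space UNIV))"
    by (simp add: space_PiM vimage_def)
  from in_vimage_algebra[OF this, of N "space M"] show ?thesis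
    by (simp add: vimage_def Int_def conj_commute)
qed

context
  fixes Y :: "'d \<Rightarrow> 'a \<Rightarrow> real"
  assumes Y_meas: "\<And>i. Y i \<in> borel_measurable M"
    and Y_nonneg: "\<And>i \<omega>. \<omega> \<in> space M \<Longrightarrow> 0 \<le> Y i \<omega>"
    and indep_N_Y: "indep_sets (\<lambda>k. case k of
          None \<Rightarrow> sets (vimage_algebra (space M) N (PiM UNIV (\<lambda>_. count_space UNIV)))
        | Some i \<Rightarrow> sets (vimage_algebra (space M) (Y i) borel)) UNIV"
begin

lemma measurable_grid_round:
  "(\<lambda>\<omega>. grid_round K (\<lambda>i. Y i \<omega>)) \<in> measurable M (PiM UNIV (\<lambda>_. borel))"
proof (rule measurable_PiM_single')
  show "(\<lambda>\<omega>. grid_round K (\<lambda>i. Y i \<omega>) i) \<in> borel_measurable M" for i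
    unfolding grid_round_def grid_point_def grid_index_def using Y_meas[of i] by measurable
qed (simp add: space_PiM)

lemma measurable_grid_round_shift:
  "(\<lambda>\<omega> i. grid_round K (\<lambda>i. Y i \<omega>) i + c) \<in> measurable M (PiM UNIV (\<lambda>_. borel))"
proof (rule measurable_PiM_single')
  show "(\<lambda>\<omega>. grid_round K (\<lambda>i. Y i \<omega>) i + c) \<in> borel_measurable M" for i
    unfolding grid_round_def grid_point_def grid_index_def using Y_meas[of i] by measurable
qed (simp add: space_PiM)

lemma grid_cell_eq_INT:
  "{\<omega> \<in> space M. grid_index K (\<lambda>i. Y i \<omega>) = D} = (\<Inter>i. {\<omega> \<in> space M. \<lfloor>Y i \<omega> * real (Suc K)\<rfloor> = D i})"
  by (auto simp: grid_index_def fun_eq_iff)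

lemma measurable_grid_index: "(\<lambda>\<omega>. grid_index K (\<lambda>i. Y i \<omega>)) \<in> measurable M (count_space UNIV)"
proof -
  have "{\<omega> \<in> space M. \<lfloor>Y i \<omega> * real (Suc K)\<rfloor> = D i} \<in> events" for i D
    using Y_meas[of i] by measurable
  then have "{\<omega> \<in> space M. grid_index K (\<lambda>i. Y i \<omega>) = D} \<in> events" for D
    unfolding grid_cell_eq_INT by (intro sets.finite_INT) auto
  then show ?thesis
    by (auto simp: measurable_count_space_eq2_countable vimage_def Int_def conj_commute)
qed

lemma prob_indep_grid_cell:
  assumes "G \<in> sets (vimage_algebra (space M) N (PiM UNIV (\<lambda>_. count_space UNIV)))"
  shows "prob (G \<inter> {\<omega> \<in> space M. grid_index K (\<lambda>i. Y i \<omega>) = D})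
       = prob G * prob {\<omega> \<in> space M. grid_index K (\<lambda>i. Y i \<omega>) = D}"
proof -
  have "{\<omega> \<in> space M. \<lfloor>Y i \<omega> * real (Suc K)\<rfloor> = D i} \<in> sets (vimage_algebra (space M) (Y i) borel)" for i
  proof -
    have "{x \<in> space borel. \<lfloor>x * real (Suc K)\<rfloor> = D i} \<in> sets borel"
      by measurable
    from in_vimage_algebra[OF this, of "Y i" "space M"] show ?thesis
      by (simp add: vimage_def Int_def conj_commute)
  qed
  then show ?thesis
    unfolding grid_cell_eq_INT using assms by (intro indep_sets_option_prob_Int[OF indep_N_Y]) auto
qed

lemma prob_grid_round_eq:
  "prob {\<omega> \<in> space M. N \<omega> (grid_round K (\<lambda>i. Y i \<omega>)) = n}
     = (\<integral>\<omega>. poisson_weight (\<Sum>i\<in>UNIV. Lam i * grid_round K (\<lambda>i. Y i \<omega>) i) n \<partial>M)"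
proof -
  define G where "G D = {\<omega> \<in> space M. N \<omega> (grid_point K D) = n}" for D
  have "prob {\<omega> \<in> space M. N \<omega> (grid_round K (\<lambda>i. Y i \<omega>)) = n}
      = prob {\<omega> \<in> space M. \<omega> \<in> G (grid_index K (\<lambda>i. Y i \<omega>))}"
    by (simp add: G_def grid_round_def)
  also have "\<dots> = (\<integral>\<omega>. prob (G (grid_index K (\<lambda>i. Y i \<omega>))) \<partial>M)"
    by (rule prob_eq_integral_indep_discrete[OF measurable_grid_index])
       (simp_all only: G_def events_mp_poisson[where P = "\<lambda>a _. a = n"]
         prob_indep_grid_cell[OF mp_poisson_vimage_event[where P = "\<lambda>a _. a = n"]])
  also have "\<dots> = (\<integral>\<omega>. poisson_weight (\<Sum>i\<in>UNIV. Lam i * grid_round K (\<lambda>i. Y i \<omega>) i) n \<partial>M)"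
    by (intro Bochner_Integration.integral_cong refl)
       (simp add: G_def grid_round_def prob_mp_poisson_eq grid_point_nonneg grid_index_nonneg Y_nonneg)
  finally show ?thesis .
qed

lemma prob_grid_round_jump_le:
  "prob {\<omega> \<in> space M. N \<omega> (grid_round K (\<lambda>i. Y i \<omega>)) \<noteq> N \<omega> (\<lambda>i. grid_round K (\<lambda>i. Y i \<omega>) i + 1 / real (Suc K))}
     \<le> (\<Sum>i\<in>UNIV. Lam i) / real (Suc K)"
proof -
  define G where "G D = {\<omega> \<in> space M. N \<omega> (grid_point K D) \<noteq> N \<omega> (\<lambda>i. grid_point K D i + 1 / real (Suc K))}"
    for D
  have G_le: "prob (G (grid_index K (\<lambda>i. Y i \<omega>))) \<le> (\<Sum>i\<in>UNIV. Lam i) / real (Suc K)" if "\<omega> \<in> space M" for \<omega>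
    using prob_mp_poisson_increment_le[of "grid_point K (grid_index K (\<lambda>i. Y i \<omega>))" "1 / real (Suc K)"]
    by (simp add: G_def that grid_point_nonneg grid_index_nonneg Y_nonneg)
  have "prob {\<omega> \<in> space M. N \<omega> (grid_round K (\<lambda>i. Y i \<omega>)) \<noteq> N \<omega> (\<lambda>i. grid_round K (\<lambda>i. Y i \<omega>) i + 1 / real (Suc K))}
      = prob {\<omega> \<in> space M. \<omega> \<in> G (grid_index K (\<lambda>i. Y i \<omega>))}"
    by (simp add: G_def grid_round_def)
  also have "\<dots> = (\<integral>\<omega>. prob (G (grid_index K (\<lambda>i. Y i \<omega>))) \<partial>M)"
    by (rule prob_eq_integral_indep_discrete[OF measurable_grid_index])
       (simp_all only: G_def events_mp_poisson[where P = "\<lambda>a b. a \<noteq> b"]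
         prob_indep_grid_cell[OF mp_poisson_vimage_event[where P = "\<lambda>a b. a \<noteq> b"]])
  also have "\<dots> \<le> (\<integral>\<omega>. (\<Sum>i\<in>UNIV. Lam i) / real (Suc K) \<partial>M)"
  proof (rule integral_mono)
    show "integrable M (\<lambda>\<omega>. prob (G (grid_index K (\<lambda>i. Y i \<omega>))))"
      using measurable_compose[OF measurable_grid_index borel_measurable_count_space]
      by (intro integrable_const_bound[where B = 1]) auto
  qed (use G_le in auto)
  finally show ?thesis
    by (simp add: prob_space)
qed

lemma abs_prob_grid_round_diff_le:
  "\<bar>prob {\<omega> \<in> space M. N \<omega> (grid_round K (\<lambda>i. Y i \<omega>)) = n} - prob {\<omega> \<in> space M. N \<omega> (\<lambda>i. Y i \<omega>) = n}\<bar>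
     \<le> (\<Sum>i\<in>UNIV. Lam i) / real (Suc K)"
proof -
  define A where "A = {\<omega> \<in> space M. N \<omega> (\<lambda>i. Y i \<omega>) = n}"
  define A' where "A' = {\<omega> \<in> space M. N \<omega> (grid_round K (\<lambda>i. Y i \<omega>)) = n}"
  define E where "E = {\<omega> \<in> space M. N \<omega> (grid_round K (\<lambda>i. Y i \<omega>))
      \<noteq> N \<omega> (\<lambda>i. grid_round K (\<lambda>i. Y i \<omega>) i + 1 / real (Suc K))}"
  have Y_vec: "(\<lambda>\<omega> i. Y i \<omega>) \<in> measurable M (PiM UNIV (\<lambda>_. borel))"
    using Y_meas by (intro measurable_PiM_single') (auto simp: space_PiM)
  have events: "A \<in> events" "A' \<in> events" "E \<in> events"
    using events_mp_poisson_at[OF Y_vec Y_vec, where P = "\<lambda>a _. a = n"]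
      events_mp_poisson_at[OF measurable_grid_round measurable_grid_round, where P = "\<lambda>a _. a = n"]
      events_mp_poisson_at[OF measurable_grid_round measurable_grid_round_shift, where P = "\<lambda>a b. a \<noteq> b"]
    by (simp_all add: A_def A'_def E_def)
  \<comment> \<open>N at Y lies between N at the grid points below and above, so A and A' differ only on E.\<close>
  have squeeze: "N \<omega> (grid_round K (\<lambda>i. Y i \<omega>)) \<le> N \<omega> (\<lambda>i. Y i \<omega>)
      \<and> N \<omega> (\<lambda>i. Y i \<omega>) \<le> N \<omega> (\<lambda>i. grid_round K (\<lambda>i. Y i \<omega>) i + 1 / real (Suc K))"
    if "\<omega> \<in> space M" for \<omega>
    using that Y_nonneg grid_round_le le_grid_round
    by (intro conjI mp_poisson_mono) (auto intro: grid_round_nonneg)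
  have "A \<subseteq> A' \<union> E" "A' \<subseteq> A \<union> E"
  proof safe
    fix \<omega> assume "\<omega> \<in> A" "\<omega> \<notin> E"
    then show "\<omega> \<in> A'"
      using squeeze[of \<omega>] unfolding A_def A'_def E_def by simp
  next
    fix \<omega> assume "\<omega> \<in> A'" "\<omega> \<notin> E"
    then show "\<omega> \<in> A"
      using squeeze[of \<omega>] unfolding A_def A'_def E_def by simp
  qed
  then have "prob A \<le> prob A' + prob E" "prob A' \<le> prob A + prob E"
    using events by (auto intro!: order_trans[OF finite_measure_mono measure_Un_le])
  moreover have "prob E \<le> (\<Sum>i\<in>UNIV. Lam i) / real (Suc K)"
    unfolding E_def by (rule prob_grid_round_jump_le)
  ultimately show ?thesis
    unfolding A_def A'_def abs_le_iff by linarith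
qed

lemma tendsto_prob_grid_round:
  "(\<lambda>K. prob {\<omega> \<in> space M. N \<omega> (grid_round K (\<lambda>i. Y i \<omega>)) = n})
     \<longlonglongrightarrow> prob {\<omega> \<in> space M. N \<omega> (\<lambda>i. Y i \<omega>) = n}"
proof -
  have "(\<lambda>K. (\<Sum>i\<in>UNIV. Lam i) / real (Suc K)) \<longlonglongrightarrow> 0"
    using LIMSEQ_Suc[OF lim_const_over_n[of "\<Sum>i\<in>UNIV. Lam i"]] by simp
  then have "(\<lambda>K. prob {\<omega> \<in> space M. N \<omega> (grid_round K (\<lambda>i. Y i \<omega>)) = n}
      - prob {\<omega> \<in> space M. N \<omega> (\<lambda>i. Y i \<omega>) = n}) \<longlonglongrightarrow> 0"
    by (rule Lim_null_comparison[rotated]) (use abs_prob_grid_round_diff_le in \<open>auto intro!: always_eventually\<close>)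
  then show ?thesis
    by (simp add: LIM_zero_iff)
qed

lemma tendsto_integral_grid_round:
  "(\<lambda>K. \<integral>\<omega>. poisson_weight (\<Sum>i\<in>UNIV. Lam i * grid_round K (\<lambda>i. Y i \<omega>) i) n \<partial>M)
     \<longlonglongrightarrow> (\<integral>\<omega>. poisson_weight (\<Sum>i\<in>UNIV. Lam i * Y i \<omega>) n \<partial>M)"
proof (rule integral_dominated_convergence[where w = "\<lambda>_. 1"])
  show "(\<lambda>\<omega>. poisson_weight (\<Sum>i\<in>UNIV. Lam i * Y i \<omega>) n) \<in> borel_measurable M"
    unfolding poisson_weight_def using Y_meas by measurable
  show "(\<lambda>\<omega>. poisson_weight (\<Sum>i\<in>UNIV. Lam i * grid_round K (\<lambda>i. Y i \<omega>) i) n) \<in> borel_measurable M" for K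
    unfolding poisson_weight_def grid_round_def grid_point_def grid_index_def using Y_meas by measurable
  show "AE \<omega> in M. (\<lambda>K. poisson_weight (\<Sum>i\<in>UNIV. Lam i * grid_round K (\<lambda>i. Y i \<omega>) i) n)
      \<longlonglongrightarrow> poisson_weight (\<Sum>i\<in>UNIV. Lam i * Y i \<omega>) n"
    unfolding poisson_weight_def by (intro AE_I2 tendsto_intros grid_round_tendsto) simp
  have "0 \<le> (\<Sum>i\<in>UNIV. Lam i * grid_round K (\<lambda>i. Y i \<omega>) i)" if "\<omega> \<in> space M" for K \<omega>
    using that Lam_pos Y_nonneg by (intro sum_nonneg mult_nonneg_nonneg grid_round_nonneg) (auto intro: less_imp_le)
  then show "AE \<omega> in M. norm (poisson_weight (\<Sum>i\<in>UNIV. Lam i * grid_round K (\<lambda>i. Y i \<omega>) i) n) \<le> 1" for K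
    by (intro AE_I2) (simp add: abs_of_nonneg poisson_weight_nonneg poisson_weight_le_1)
qed simp

lemma prob_mp_poisson_at_indep:
  "prob {\<omega> \<in> space M. N \<omega> (\<lambda>i. Y i \<omega>) = n} = (\<integral>\<omega>. poisson_weight (\<Sum>i\<in>UNIV. Lam i * Y i \<omega>) n \<partial>M)"
proof -
  have "(\<lambda>K. prob {\<omega> \<in> space M. N \<omega> (grid_round K (\<lambda>i. Y i \<omega>)) = n})
      \<longlonglongrightarrow> (\<integral>\<omega>. poisson_weight (\<Sum>i\<in>UNIV. Lam i * Y i \<omega>) n \<partial>M)"
    unfolding prob_grid_round_eq by (rule tendsto_integral_grid_round)
  with tendsto_prob_grid_round show ?thesis
    by (rule LIMSEQ_unique)
qed

end

end

lemma stable_subordinator_nonneg: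
  assumes "stable_subordinator M a S" "\<omega> \<in> space M" "0 \<le> t"
  shows "0 \<le> S \<omega> t"
proof -
  have "S \<omega> 0 \<le> S \<omega> t"
    using assms unfolding stable_subordinator_def by blast
  moreover have "S \<omega> 0 = 0"
    using assms by (simp add: stable_subordinator_def)
  ultimately show ?thesis
    by simp
qed

lemma prob_mp_poisson_stable_zero:
  assumes "prob_space M" "mp_poisson M Lam N" "\<And>i. stable_subordinator M (\<alpha> i) (S i)"
  shows "measure M {\<omega> \<in> space M. N \<omega> (\<lambda>i. S i \<omega> 0) = n} = (if n = 0 then 1 else 0)"
proof -
  have "N \<omega> (\<lambda>i. S i \<omega> 0) = 0" if "\<omega> \<in> space M" for \<omega>
  proof -
    have "(\<lambda>i. S i \<omega> 0) = (\<lambda>_. 0)"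
      using assms(3) that by (simp add: stable_subordinator_def)
    then show ?thesis
      using assms(2) that by (simp add: mp_poisson_def)
  qed
  then have "{\<omega> \<in> space M. N \<omega> (\<lambda>i. S i \<omega> 0) = n} = (if n = 0 then space M else {})"
    by auto
  then show ?thesis
    using prob_space.prob_space[OF assms(1)] by simp
qed

lemma sets_vimage_algebra_component_subset:
  "sets (vimage_algebra X (\<lambda>x. f x t) borel) \<subseteq> sets (vimage_algebra X f (PiM UNIV (\<lambda>_. borel)))"
proof
  fix A assume "A \<in> sets (vimage_algebra X (\<lambda>x. f x t) borel)"
  then obtain B where B: "B \<in> sets borel" "A = (\<lambda>x. f x t) -` B \<inter> X"
    by (auto simp: sets_vimage_algebra2)
  have "(\<lambda>g. g t) \<in> measurable (PiM UNIV (\<lambda>_. borel)) borel"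
    by (rule measurable_component_singleton) simp
  from measurable_sets[OF this B(1)]
  have "(\<lambda>g. g t) -` B \<inter> space (PiM UNIV (\<lambda>_. borel)) \<in> sets (PiM UNIV (\<lambda>_. borel))" .
  from in_vimage_algebra[OF this, of f X] show "A \<in> sets (vimage_algebra X f (PiM UNIV (\<lambda>_. borel)))"
    by (simp add: B(2) space_PiM vimage_def)
qed

lemma prob_mp_poisson_stable_time:
  fixes Lam \<alpha> :: "'d::finite \<Rightarrow> real" and S :: "'d \<Rightarrow> 'a \<Rightarrow> real \<Rightarrow> real"
  assumes M: "prob_space M" and Lam: "\<And>i. 0 < Lam i" and \<alpha>: "\<And>i. 0 \<le> \<alpha> i \<and> \<alpha> i \<le> 1"
    and N: "mp_poisson M Lam N" and S: "\<And>i. stable_subordinator M (\<alpha> i) (S i)"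
    and indep: "prob_space.indep_sets M
           (\<lambda>k. case k of
                None \<Rightarrow> sets (vimage_algebra (space M) N (PiM UNIV (\<lambda>_. count_space UNIV)))
              | Some i \<Rightarrow> sets (vimage_algebra (space M) (S i) (PiM UNIV (\<lambda>_. borel))))
           UNIV"
    and "0 \<le> t"
  shows "measure M {\<omega> \<in> space M. N \<omega> (\<lambda>i. S i \<omega> t) = n} = stable_mpoisson_prob \<alpha> (\<lambda>i. Lam i powr \<alpha> i) n t"
proof -
  interpret prob_space M
    by (rule M)
  have S_meas: "(\<lambda>\<omega>. S i \<omega> t) \<in> borel_measurable M" for i
    using S[of i] by (simp add: stable_subordinator_def)
  have S_nonneg: "0 \<le> S i \<omega> t" if "\<omega> \<in> space M" for i \<omega>
    using S that \<open>0 \<le> t\<close> by (rule stable_subordinator_nonneg)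
  have laplace: "(\<integral>\<omega>. exp (- w * S i \<omega> t) \<partial>M) = exp (- t * w powr \<alpha> i)" if "0 < w" for i w
    using S[of i] that \<open>0 \<le> t\<close> unfolding stable_subordinator_def by blast
  have indep_t: "indep_sets (\<lambda>k. case k of
          None \<Rightarrow> sets (vimage_algebra (space M) N (PiM UNIV (\<lambda>_. count_space UNIV)))
        | Some i \<Rightarrow> sets (vimage_algebra (space M) (\<lambda>\<omega>. S i \<omega> t) borel)) UNIV"
    by (rule indep_sets_mono_sets[OF indep])
       (auto split: option.split intro: sets_vimage_algebra_component_subset[THEN subsetD])
  have "indep_vars (\<lambda>_. borel) (\<lambda>i \<omega>. S i \<omega> t) UNIV"
    by (rule indep_vars_of_indep_sets_option[OF indep_t S_meas]) simp
  then have indep_vars: "indep_vars (\<lambda>_. borel) (\<lambda>i \<omega>. Lam i * S i \<omega> t) UNIV"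
    by (rule indep_vars_compose2[where Y = "\<lambda>i x. Lam i * x"]) simp
  have "prob {\<omega> \<in> space M. N \<omega> (\<lambda>i. S i \<omega> t) = n}
      = (\<integral>\<omega>. poisson_weight (\<Sum>i\<in>UNIV. Lam i * S i \<omega> t) n \<partial>M)"
    by (rule prob_mp_poisson_at_indep[OF M Lam N S_meas S_nonneg indep_t])
  also have "\<dots> = (\<Sum>m\<in>Theta n. \<Prod>i\<in>UNIV. \<integral>\<omega>. poisson_weight (Lam i * S i \<omega> t) (m i) \<partial>M)"
    using Lam S_nonneg
    by (intro integral_poisson_weight_sum_indep[OF indep_vars]) (auto intro!: mult_nonneg_nonneg[OF less_imp_le[OF Lam]])
  also have "\<dots> = stable_mpoisson_prob \<alpha> (\<lambda>i. Lam i powr \<alpha> i) n t"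
    unfolding stable_mpoisson_prob_def
    using \<alpha> by (intro sum.cong prod.cong refl integral_poisson_weight_stable S_meas S_nonneg Lam laplace) auto
  finally show ?thesis .
qed

theorem mainTheorem7:
  fixes M :: "'a measure"
    and Lam :: "'d::finite \<Rightarrow> real"
    and \<alpha> :: "'d \<Rightarrow> real"
    and N :: "'a \<Rightarrow> ('d \<Rightarrow> real) \<Rightarrow> nat"
    and S :: "'d \<Rightarrow> 'a \<Rightarrow> real \<Rightarrow> real"
    and p :: "nat \<Rightarrow> real \<Rightarrow> real"
  assumes "prob_space M"
    and "\<And>i. 0 < Lam i"
    and "\<And>i. 0 < \<alpha> i \<and> \<alpha> i < 1"
    and "mp_poisson M Lam N"
    and "\<And>i. stable_subordinator M (\<alpha> i) (S i)"
    and "prob_space.indep_sets M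
           (\<lambda>k. case k of
                None \<Rightarrow> sets (vimage_algebra (space M) N (PiM UNIV (\<lambda>_. count_space UNIV)))
              | Some i \<Rightarrow> sets (vimage_algebra (space M) (S i) (PiM UNIV (\<lambda>_. borel))))
           UNIV"
    and "\<And>n t. p n t = measure M {\<omega>\<in>space M. N \<omega> (\<lambda>i. S i \<omega> t) = n}"
  shows "(\<forall>n t. 0 \<le> t \<longrightarrow>
            p n t = (\<Sum>m\<in>Theta n. \<Prod>i\<in>UNIV.
               (-1) ^ m i / fact (m i) *
               (\<Sum>r. (- (Lam i powr \<alpha> i) * t) ^ r * Gamma (\<alpha> i * real r + 1)
                      / (fact r * Gamma (\<alpha> i * real r + 1 - real (m i))))))
       \<and> (\<forall>n t. 0 < t \<longrightarrow>
            ((p n) has_real_derivative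
               (- (\<Sum>j\<in>UNIV. Lam j powr \<alpha> j *
                   (\<Sum>r=0..n. (-1) ^ r * Gamma (\<alpha> j + 1)
                      / (fact r * Gamma (\<alpha> j + 1 - real r)) * p (n - r) t)))) (at t))
       \<and> p 0 0 = 1 \<and> (\<forall>n\<ge>1. p n 0 = 0)"
proof -
  define c where "c i = Lam i powr \<alpha> i" for i
  have \<alpha>: "0 \<le> \<alpha> i" "\<alpha> i \<le> 1" for i
    using assms(3)[of i] by auto
  have p_eq: "p n s = stable_mpoisson_prob \<alpha> c n s" if "0 \<le> s" for n s
    using prob_mp_poisson_stable_time[OF assms(1,2) _ assms(4-6) that] assms(7) \<alpha>
    by (simp add: c_def[abs_def])
  have p_0: "p n 0 = (if n = 0 then 1 else 0)" for n
    using prob_mp_poisson_stable_zero[OF assms(1,4,5)] assms(7) by simp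
  show ?thesis
    apply (intro conjI allI impI)
    subgoal for n t
      using \<alpha> by (simp add: p_eq stable_mpoisson_prob_def stable_poisson_prob_Gamma c_def)
    subgoal premises t_pos for n t
      using has_real_derivative_stable_mpoisson_prob[where a = \<alpha> and c = c and n = n and t = t, OF \<alpha>]
      unfolding p_eq[OF less_imp_le[OF t_pos], symmetric] c_def
      by (rule has_field_derivative_transform_within_open[where S = "{0<..}"])
         (use t_pos p_eq in \<open>auto simp: c_def[abs_def]\<close>)
    by (simp_all add: p_0)
qed

end
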